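(* Let $\Phi$ be a rooted triple formula all of whose clauses are tame. If the graph $F_\Phi$ is connected, then $\Phi$ is unsatisfiable.
   Context: Rooted triple formula: conjunction of clauses, each a disjunction of literals $xy|z$, with the convention that no literal has the form $xx|y$, $xy|x$ or $xy|y$. Satisfiable: there is a rooted binary tree $T$ (root has two neighbours, every other vertex three or one) and a map $\alpha$ from variables to leaves of $T$ such that each clause contains a literal $xy|z$ with $\alpha(x),\alpha(y),\alpha(z)$ pairwise distinct and $\mathrm{yca}(\alpha(x),\alpha(y))$ strictly below $\mathrm{yca}(\alpha(x),\alpha(z))$ (yca = common ancestor farthest from the root). A clause is trivial if it is satisfied by every injective map of its variables into the leaves of every rooted binary tree. A clause $x_1y_1|z_1\vee\dots\vee x_py_p|z_p$ is tame if it is trivial or $\{x_i,y_i\}=\{x_j,y_j\}$ for all $i,j$. For $\Phi$ with tame clauses, $F_\Phi$ is the graph on the variables of $\Phi$ with an edge $\{x,y\}$ iff $\Phi$ contains a clause $xy|z_1\vee\dots\vee xy|z_p$ with $p\ge1$. *)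

theory Defs
  imports Main "HOL-Library.Sublist"
begin

(* Rooted binary trees (shapes). A vertex is addressed by its path from the root
   (False = left child, True = right child). *)
datatype rtree = Leaf | Node rtree rtree

(* Rooted binary tree in the sense of the paper: root has two neighbours (so it is
   an internal node), every internal non-root vertex has 3 neighbours (parent + 2
   children), leaves have 1. *)
definition rooted_binary :: "rtree \<Rightarrow> bool" where
  "rooted_binary T \<longleftrightarrow> T \<noteq> Leaf"

fun leaves :: "rtree \<Rightarrow> bool list set" where
  "leaves Leaf = {[]}"
| "leaves (Node l r) = Cons False ` leaves l \<union> Cons True ` leaves r"

(* youngest common ancestor of two vertices = longest common prefix of their paths *)
definition yca :: "bool list \<Rightarrow> bool list \<Rightarrow> bool list" where
  "yca p q = longest_common_prefix p q"

(* a literal xy|z is the triple (x,y,z); a clause is a disjunction (list) of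
   literals; a formula is a conjunction (list) of clauses *)
type_synonym 'v literal = "'v \<times> 'v \<times> 'v"
type_synonym 'v clause = "'v literal list"
type_synonym 'v formula = "'v clause list"

definition wf_literal :: "'v literal \<Rightarrow> bool" where
  "wf_literal l = (case l of (x, y, z) \<Rightarrow> x \<noteq> y \<and> z \<noteq> x \<and> z \<noteq> y)"

definition wf_formula :: "'v formula \<Rightarrow> bool" where
  "wf_formula \<Phi> \<longleftrightarrow> (\<forall>C \<in> set \<Phi>. \<forall>l \<in> set C. wf_literal l)"

definition lit_vars :: "'v literal \<Rightarrow> 'v set" where
  "lit_vars l = (case l of (x, y, z) \<Rightarrow> {x, y, z})"

definition clause_vars :: "'v clause \<Rightarrow> 'v set" where
  "clause_vars C = (\<Union>l \<in> set C. lit_vars l)"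

definition formula_vars :: "'v formula \<Rightarrow> 'v set" where
  "formula_vars \<Phi> = (\<Union>C \<in> set \<Phi>. clause_vars C)"

definition sat_literal :: "('v \<Rightarrow> bool list) \<Rightarrow> 'v literal \<Rightarrow> bool" where
  "sat_literal \<alpha> l = (case l of (x, y, z) \<Rightarrow>
     \<alpha> x \<noteq> \<alpha> y \<and> \<alpha> x \<noteq> \<alpha> z \<and> \<alpha> y \<noteq> \<alpha> z \<and>
     strict_prefix (yca (\<alpha> x) (\<alpha> z)) (yca (\<alpha> x) (\<alpha> y)))"

definition sat_clause :: "('v \<Rightarrow> bool list) \<Rightarrow> 'v clause \<Rightarrow> bool" where
  "sat_clause \<alpha> C \<longleftrightarrow> (\<exists>l \<in> set C. sat_literal \<alpha> l)"

definition satisfiable :: "'v formula \<Rightarrow> bool" where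
  "satisfiable \<Phi> \<longleftrightarrow> (\<exists>T \<alpha>. rooted_binary T \<and>
      (\<forall>x \<in> formula_vars \<Phi>. \<alpha> x \<in> leaves T) \<and>
      (\<forall>C \<in> set \<Phi>. sat_clause \<alpha> C))"

definition trivial_clause :: "'v clause \<Rightarrow> bool" where
  "trivial_clause C \<longleftrightarrow> (\<forall>T \<alpha>. rooted_binary T \<longrightarrow>
      inj_on \<alpha> (clause_vars C) \<longrightarrow> \<alpha> ` clause_vars C \<subseteq> leaves T \<longrightarrow>
      sat_clause \<alpha> C)"

definition tame_clause :: "'v clause \<Rightarrow> bool" where
  "tame_clause C \<longleftrightarrow> trivial_clause C \<or>
     (\<forall>(x, y, z) \<in> set C. \<forall>(x', y', z') \<in> set C. {x, y} = {x', y'})"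

definition F_edges :: "'v formula \<Rightarrow> ('v \<times> 'v) set" where
  "F_edges \<Phi> = {(x, y). \<exists>C \<in> set \<Phi>. C \<noteq> [] \<and>
      (\<forall>(a, b, c) \<in> set C. {a, b} = {x, y})}"

(* connectedness of F_Phi (a connected graph has at least one vertex) *)
definition F_connected :: "'v formula \<Rightarrow> bool" where
  "F_connected \<Phi> \<longleftrightarrow> formula_vars \<Phi> \<noteq> {} \<and>
     (\<forall>u \<in> formula_vars \<Phi>. \<forall>v \<in> formula_vars \<Phi>. (u, v) \<in> (F_edges \<Phi>)\<^sup>*)"

end

theory Submission
  imports Defs
begin

(* If a literal xy|z is satisfied, then
   yca(x,y) strictly extends yca(x,z), so it is non-empty: x and y lie in the same
   subtree of the root.  An edge {x,y} of F_Phi comes from a non-empty clause all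
   of whose literals have the pair {x,y}; whichever literal is satisfied, x and y
   end up in the same root subtree.  Since F_Phi is connected, ALL variables are
   mapped into one subtree; deleting the first step of every path then yields a
   satisfying assignment into that smaller subtree.  By induction on the tree this
   descends to a single leaf, where no literal can be satisfied. *)

lemma sat_literal_same_branch:
  assumes "sat_literal \<alpha> (x, y, z)"
  shows "\<alpha> x \<noteq> [] \<and> \<alpha> y \<noteq> [] \<and> hd (\<alpha> x) = hd (\<alpha> y)"
proof -
  have "yca (\<alpha> x) (\<alpha> y) \<noteq> []"
    using assms by (auto simp: sat_literal_def strict_prefix_def)
  then show ?thesis
    unfolding yca_def by (cases "\<alpha> x"; cases "\<alpha> y") (auto split: if_splits)
qed

lemma sat_literal_tl:
  assumes "sat_literal \<alpha> (x, y, z)"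
    and "\<alpha> x = h # a" "\<alpha> y = h # b" "\<alpha> z = h # c"
  shows "sat_literal (tl \<circ> \<alpha>) (x, y, z)"
  using assms by (auto simp: sat_literal_def yca_def strict_prefix_def)

lemma leaves_Node_tl:
  assumes "p \<in> leaves (Node l r)"
  shows "p \<noteq> [] \<and> tl p \<in> leaves (if hd p then r else l)"
  using assms by auto

lemma sat_literal_in_formula:
  assumes "C \<in> set \<Phi>" "sat_clause \<alpha> C"
  obtains x y z where "(x, y, z) \<in> set C" "sat_literal \<alpha> (x, y, z)"
    and "x \<in> formula_vars \<Phi>" "y \<in> formula_vars \<Phi>" "z \<in> formula_vars \<Phi>"
  using assms unfolding sat_clause_def
  by (fastforce simp: formula_vars_def clause_vars_def lit_vars_def)

lemma F_edge_same_branch: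
  assumes sat: "\<forall>C \<in> set \<Phi>. sat_clause \<alpha> C"
    and edge: "(u, v) \<in> F_edges \<Phi>"
  shows "hd (\<alpha> u) = hd (\<alpha> v)"
proof -
  obtain C where C: "C \<in> set \<Phi>" "C \<noteq> []" "\<forall>(a, b, c) \<in> set C. {a, b} = {u, v}"
    using edge by (auto simp: F_edges_def)
  obtain x y z where lit: "(x, y, z) \<in> set C" "sat_literal \<alpha> (x, y, z)"
    by (rule sat_literal_in_formula[OF C(1) bspec[OF sat C(1)]])
  have "{x, y} = {u, v}"
    using C(3) lit(1) by fastforce
  moreover have "hd (\<alpha> x) = hd (\<alpha> y)"
    using sat_literal_same_branch[OF lit(2)] by blast
  ultimately show ?thesis
    by (metis doubleton_eq_iff)
qed

lemma F_connected_same_branch: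
  assumes "F_connected \<Phi>" "\<forall>C \<in> set \<Phi>. sat_clause \<alpha> C"
    and "u \<in> formula_vars \<Phi>" "v \<in> formula_vars \<Phi>"
  shows "hd (\<alpha> u) = hd (\<alpha> v)"
proof -
  have "(u, v) \<in> (F_edges \<Phi>)\<^sup>*"
    using assms(1,3,4) by (auto simp: F_connected_def)
  then show ?thesis
    by induction (auto dest: F_edge_same_branch[OF assms(2)])
qed

lemma F_connected_no_model:
  assumes conn: "F_connected \<Phi>"
  shows "\<lbrakk>\<forall>x \<in> formula_vars \<Phi>. \<alpha> x \<in> leaves T; \<forall>C \<in> set \<Phi>. sat_clause \<alpha> C\<rbrakk> \<Longrightarrow> False"
proof (induction T arbitrary: \<alpha>)
  case Leaf
  obtain C where C: "C \<in> set \<Phi>"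
    using conn by (auto simp: F_connected_def formula_vars_def)
  obtain x y z where "(x, y, z) \<in> set C" and lit: "sat_literal \<alpha> (x, y, z)"
    and x: "x \<in> formula_vars \<Phi>" and "y \<in> formula_vars \<Phi>" "z \<in> formula_vars \<Phi>"
    by (rule sat_literal_in_formula[OF C bspec[OF Leaf.prems(2) C]])
  have "\<alpha> x \<noteq> []"
    using sat_literal_same_branch[OF lit] by blast
  then show False
    using Leaf.prems(1) x by auto
next
  case (Node l r)
  let ?V = "formula_vars \<Phi>"
  obtain v where v: "v \<in> ?V"
    using conn by (auto simp: F_connected_def)
  define h where "h = hd (\<alpha> v)"
  have head: "hd (\<alpha> x) = h" if "x \<in> ?V" for x
    using F_connected_same_branch[OF conn Node.prems(2) that v] by (simp add: h_def)
  have leaf: "\<alpha> x \<noteq> [] \<and> tl (\<alpha> x) \<in> leaves (if h then r else l)" if "x \<in> ?V" for x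
    using leaves_Node_tl[of "\<alpha> x" l r] Node.prems(1) that head[OF that] by simp
  have shape: "\<alpha> x = h # tl (\<alpha> x)" if "x \<in> ?V" for x
    using leaf[OF that] head[OF that] by (cases "\<alpha> x") auto
  have sat_tl: "\<forall>C \<in> set \<Phi>. sat_clause (tl \<circ> \<alpha>) C"
  proof
    fix C assume C: "C \<in> set \<Phi>"
    obtain x y z where lit: "(x, y, z) \<in> set C" "sat_literal \<alpha> (x, y, z)"
      and x: "x \<in> ?V" and y: "y \<in> ?V" and z: "z \<in> ?V"
      by (rule sat_literal_in_formula[OF C bspec[OF Node.prems(2) C]])
    have "sat_literal (tl \<circ> \<alpha>) (x, y, z)"
      by (rule sat_literal_tl[OF lit(2) shape[OF x] shape[OF y] shape[OF z]])
    with lit(1) show "sat_clause (tl \<circ> \<alpha>) C" by (auto simp: sat_clause_def)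
  qed
  have leaves_tl: "\<forall>x \<in> ?V. (tl \<circ> \<alpha>) x \<in> leaves (if h then r else l)"
    using leaf by simp
  show False
  proof (cases h)
    case True
    show ?thesis
      by (rule Node.IH(2)[OF _ sat_tl]) (use leaves_tl True in simp)
  next
    case False
    show ?thesis
      by (rule Node.IH(1)[OF _ sat_tl]) (use leaves_tl False in simp)
  qed
qed

theorem mainTheorem7:
  fixes \<Phi> :: "'v formula"
  assumes "wf_formula \<Phi>"
    and "\<forall>C \<in> set \<Phi>. tame_clause C"
    and "F_connected \<Phi>"
  shows "\<not> satisfiable \<Phi>"
  using F_connected_no_model[OF assms(3)] unfolding satisfiable_def by blast

end
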